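(* Let $\tau\in\mathcal S_0^+$ and $x,y\in[0,\infty)$. Then $$\tau(x)+\tau(y)\ \le\ \tau(|x-y|)+2y\,\tau'(x).$$
   Context: $\mathcal S_0^+$ is the set of nondecreasing convex $\tau:[0,\infty)\to\mathbb R$, differentiable on $(0,\infty)$ with concave derivative $\tau'$, where $\tau'(0):=\lim_{x\searrow0}\tau'(x)$, such that $\tau(0)=0$ and $\tau'(x)>0$ for all $x>0$. *)

theory Defs
  imports "HOL-Analysis.Analysis"
begin

definition tau_deriv :: "(real \<Rightarrow> real) \<Rightarrow> real \<Rightarrow> real" where
  "tau_deriv \<tau> x = (if x > 0 then deriv \<tau> x else Lim (at_right 0) (deriv \<tau>))"

text \<open>The class S_0^+ (functions on [0,infinity); values outside are irrelevant).\<close>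
definition S0plus :: "(real \<Rightarrow> real) set" where
  "S0plus = {\<tau>.
      mono_on {0..} \<tau>
    \<and> convex_on {0..} \<tau>
    \<and> (\<forall>x>0. \<tau> differentiable (at x))
    \<and> concave_on {0<..} (deriv \<tau>)
    \<and> \<tau> 0 = 0
    \<and> (\<forall>x>0. deriv \<tau> x > 0)}"

end

theory Submission
  imports Defs
begin

text \<open>Both cases rest on the tangent-line inequality of the convex function \<tau>, applied at
  \<open>max x y\<close> to compare \<open>\<tau> \<bar>x - y\<bar>\<close> with \<open>\<tau> (max x y)\<close>, and at the
  remaining point towards \<open>0\<close> to get \<open>\<tau> t \<le> t \<tau>'(t)\<close>. If \<open>y \<le> x\<close>, monotonicity of \<open>\<tau>'\<close>
  finishes the proof. If \<open>x < y\<close>, one needs \<open>x \<tau>'(y) \<le> y \<tau>'(x)\<close>, i.e. that \<open>\<tau>'(t)/t\<close> is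
  nonincreasing, which holds because \<open>\<tau>'\<close> is concave and positive.\<close>

lemma convex_on_above_tangent:
  fixes f :: "real \<Rightarrow> real"
  assumes "convex_on S f" "connected S" "c \<in> interior S" "z \<in> S" "f differentiable (at c)"
  shows "f z \<ge> f c + deriv f c * (z - c)"
proof -
  have "(f has_field_derivative deriv f c) (at c within S)"
    using assms(5) DERIV_deriv_iff_real_differentiable has_field_derivative_at_within by blast
  from convex_on_imp_above_tangent[OF assms(1-4) this] show ?thesis by simp
qed

lemma convex_on_nonneg_above_tangent:
  fixes f :: "real \<Rightarrow> real"
  assumes "convex_on {0..} f" "f differentiable (at c)" "c > 0" "z \<ge> 0"
  shows "f z \<ge> f c + deriv f c * (z - c)"
  using convex_on_above_tangent[OF assms(1) _ _ _ assms(2)] assms(3,4)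
  by (simp add: is_interval_connected)

lemma convex_on_nonneg_deriv_mono:
  fixes f :: "real \<Rightarrow> real"
  assumes "convex_on {0..} f" "\<And>t. t > 0 \<Longrightarrow> f differentiable (at t)" "0 < a" "a \<le> b"
  shows "deriv f a \<le> deriv f b"
proof -
  have "f b \<ge> f a + deriv f a * (b - a)" "f a \<ge> f b + deriv f b * (a - b)"
    using convex_on_nonneg_above_tangent[OF assms(1) assms(2)] assms(3,4) by auto
  then have "(deriv f b - deriv f a) * (b - a) \<ge> 0" by (simp add: algebra_simps)
  then show ?thesis using assms(4) by (cases "a = b") (auto simp: zero_le_mult_iff)
qed

text \<open>The chord
  from \<open>e\<close> to \<open>y\<close> gives \<open>g x \<ge> (x - e)/(y - e) * g y\<close> for \<open>0 < e < x\<close>; let \<open>e \<rightarrow> 0\<close>.\<close>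
lemma concave_on_pos_ratio_antimono:
  fixes g :: "real \<Rightarrow> real"
  assumes conc: "concave_on {0<..} g" and nonneg: "\<And>t. t > 0 \<Longrightarrow> g t \<ge> 0"
    and "0 < x" "x \<le> y"
  shows "x * g y \<le> y * g x"
proof (cases "x = y")
  case False
  with assms have "x < y" by simp
  define chord where "chord = (\<lambda>e. (x - e) / (y - e) * g y)"
  have "(chord \<longlongrightarrow> (x - 0) / (y - 0) * g y) (at_right 0)"
    unfolding chord_def using \<open>x < y\<close> \<open>0 < x\<close> by (intro tendsto_intros) auto
  then have lim: "(chord \<longlongrightarrow> x / y * g y) (at_right 0)" by simp
  have "chord e \<le> g x" if "0 < e" "e < x" for e
  proof -
    define t where "t = (x - e) / (y - e)"
    have "t * (y - e) = x - e" using that \<open>x < y\<close> by (simp add: t_def)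
    then have "t * y + (1 - t) * e = x" by (simp add: algebra_simps)
    moreover have "0 \<le> t" "t \<le> 1" using that \<open>x < y\<close> by (auto simp: t_def)
    ultimately have t: "0 \<le> t" "t \<le> 1" "t * y + (1 - t) * e = x" by auto
    have "g ((1 - t) * e + t * y) \<ge> (1 - t) * g e + t * g y"
      using concave_onD[OF conc t(1,2), of e y] that \<open>x < y\<close> by simp
    moreover have "(1 - t) * g e \<ge> 0" using nonneg[OF \<open>0 < e\<close>] t by simp
    moreover have "chord e = t * g y" by (simp add: chord_def t_def)
    ultimately show ?thesis using t(3) by (simp add: add.commute)
  qed
  then have "eventually (\<lambda>e. chord e \<le> g x) (at_right 0)"
    using eventually_at_right_field \<open>0 < x\<close> by blast
  from tendsto_upperbound[OF lim this] have "x / y * g y \<le> g x" by simp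
  then show ?thesis using \<open>0 < x\<close> \<open>x < y\<close> by (simp add: field_simps)
qed simp

lemma Lim_at_right_0_nonneg_mono:
  fixes g :: "real \<Rightarrow> real"
  assumes mono: "\<And>a b. 0 < a \<Longrightarrow> a \<le> b \<Longrightarrow> g a \<le> g b" and nonneg: "\<And>t. t > 0 \<Longrightarrow> g t \<ge> 0"
  shows "Lim (at_right 0) g \<ge> 0"
proof -
  have "(g \<longlongrightarrow> Inf (g ` ({0<..} \<inter> UNIV))) (at 0 within ({0<..} \<inter> UNIV))"
    by (rule Lim_right_bound[where K = 0]) (auto intro: mono nonneg)
  then have lim: "(g \<longlongrightarrow> Inf (g ` {0<..})) (at_right 0)" by simp
  have "eventually (\<lambda>t. 0 \<le> g t) (at_right 0)"
    using eventually_at_right_less[of "0::real"] by eventually_elim (rule nonneg)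
  from tendsto_lowerbound[OF lim this] show ?thesis
    using lim by (simp add: tendsto_Lim)
qed

lemma S0plus_tangent:
  assumes "\<tau> \<in> S0plus" "c > 0" "z \<ge> 0"
  shows "\<tau> z \<ge> \<tau> c + deriv \<tau> c * (z - c)"
  using assms convex_on_nonneg_above_tangent unfolding S0plus_def by blast

lemma S0plus_deriv_mono:
  assumes "\<tau> \<in> S0plus" "0 < a" "a \<le> b"
  shows "deriv \<tau> a \<le> deriv \<tau> b"
  using assms convex_on_nonneg_deriv_mono unfolding S0plus_def by blast

lemma S0plus_le_mult_deriv:
  assumes "\<tau> \<in> S0plus" "t > 0"
  shows "\<tau> t \<le> t * deriv \<tau> t"
  using S0plus_tangent[OF assms, of 0] assms(1) by (simp add: S0plus_def algebra_simps)

lemma S0plus_le_mult_deriv_of_le: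
  assumes "\<tau> \<in> S0plus" "0 \<le> y" "y \<le> x" "0 < x"
  shows "\<tau> y \<le> y * deriv \<tau> x"
proof (cases "y = 0")
  case True
  then show ?thesis using assms(1) by (simp add: S0plus_def)
next
  case False
  then have "0 < y" using assms(2) by simp
  then have "\<tau> y \<le> y * deriv \<tau> y" using S0plus_le_mult_deriv[OF assms(1)] by blast
  also have "\<dots> \<le> y * deriv \<tau> x"
    using S0plus_deriv_mono[OF assms(1) \<open>0 < y\<close> assms(3)] assms(2) by (rule mult_left_mono)
  finally show ?thesis .
qed

lemma S0plus_deriv_ratio_antimono:
  assumes "\<tau> \<in> S0plus" "0 < x" "x \<le> y"
  shows "x * deriv \<tau> y \<le> y * deriv \<tau> x"
  using concave_on_pos_ratio_antimono[of "deriv \<tau>" x y] assms unfolding S0plus_def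
  by (simp add: less_imp_le)

lemma S0plus_tau_deriv_0_nonneg:
  assumes "\<tau> \<in> S0plus"
  shows "tau_deriv \<tau> 0 \<ge> 0"
  using Lim_at_right_0_nonneg_mono[of "deriv \<tau>"] S0plus_deriv_mono[OF assms] assms
  by (auto simp: tau_deriv_def S0plus_def less_imp_le)

theorem mainTheorem18:
  fixes \<tau> :: "real \<Rightarrow> real" and x y :: real
  assumes "\<tau> \<in> S0plus" and "x \<ge> 0" and "y \<ge> 0"
  shows "\<tau> x + \<tau> y \<le> \<tau> \<bar>x - y\<bar> + 2 * y * tau_deriv \<tau> x"
proof -
  consider "x = 0" | "0 < x" "y \<le> x" | "0 < x" "x < y" using assms(2) by linarith
  then show ?thesis
  proof cases
    case 1
    then show ?thesis using S0plus_tau_deriv_0_nonneg[OF assms(1)] assms(1,3)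
      by (simp add: S0plus_def)
  next
    case 2
    have "\<tau> (x - y) \<ge> \<tau> x - y * deriv \<tau> x"
      using S0plus_tangent[OF assms(1) \<open>0 < x\<close>, of "x - y"] 2 by (simp add: algebra_simps)
    moreover have "\<tau> y \<le> y * deriv \<tau> x"
      using S0plus_le_mult_deriv_of_le[OF assms(1,3)] 2 by blast
    ultimately show ?thesis using 2 by (simp add: tau_deriv_def)
  next
    case 3
    have "\<tau> (y - x) \<ge> \<tau> y - x * deriv \<tau> y"
      using S0plus_tangent[OF assms(1), of y "y - x"] 3 by (simp add: algebra_simps)
    moreover have "\<tau> x \<le> x * deriv \<tau> x" using S0plus_le_mult_deriv[OF assms(1) \<open>0 < x\<close>] .
    moreover have "x * deriv \<tau> y \<le> y * deriv \<tau> x"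
      using S0plus_deriv_ratio_antimono[OF assms(1) \<open>0 < x\<close>] 3 by simp
    moreover have "x * deriv \<tau> x \<le> y * deriv \<tau> x"
      using assms(1) 3 by (intro mult_right_mono) (auto simp: S0plus_def less_imp_le)
    ultimately show ?thesis using 3 by (simp add: tau_deriv_def)
  qed
qed

end
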